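(* Assume $(X,T)$ is topologically mixing and $\phi$ satisfies (H2). Let $a\in\mathcal W^1$, $N\in\mathbb N$ with $\Omega^*=\{\omega\in\Omega_a:N_{aa}(\omega)\le N\}$ of positive measure. Then for a.e. $\omega\in\Omega^*$ and all $m,n\ge N$ with $\theta^m\omega,\theta^{m+n}\omega\in\Omega^*$, $$\mathcal Z^\omega_m(a)\,\mathcal Z^{\theta^m\omega}_n(a)\le B_{\theta^m\omega}\,\mathcal Z^\omega_{m+n}(a).$$
   Context: Let $(\Omega,\mathcal F,P)$ be a probability space and $\theta:\Omega\to\Omega$ an invertible, bimeasurable, $P$-preserving, ergodic map. Let $\ell:\Omega\to\mathbb N\cup\{\infty\}$ be measurable with $\ell_\omega>1$, and for a.e. $\omega$ let $A_\omega=(\alpha_{ij}(\omega))_{0\le i<\ell_\omega,\,0\le j<\ell_{\theta\omega}}$ be a $\{0,1\}$-matrix depending measurably on $\omega$ such that every row contains an entry $1$. Put $X_\omega=\{x=(x_0,x_1,\dots): x_i<\ell_{\theta^i\omega},\ \alpha_{x_ix_{i+1}}(\theta^i\omega)=1\ \forall i\ge0\}$, $T_\omega:X_\omega\to X_{\theta\omega}$ the left shift, $T^n_\omega=T_{\theta^{n-1}\omega}\circ\cdots\circ T_\omega$. A word $w=(w_0,\dots,w_{n-1})$ is $\omega$-admissible if $w_i<\ell_{\theta^i\omega}$ for all $i<n$ and $\alpha_{w_iw_{i+1}}(\theta^i\omega)=1$ for $i<n-1$; $\mathcal W^n_\omega$ is the set of such words of length $n$; $[w]_\omega=\{x\in X_\omega: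 x_i=w_i,\ i<n\}$; $\Omega_w=\{\omega: w\in\mathcal W^n_\omega\}$; $\mathcal W^n$ is the set of words $w$ of length $n$ with $P(\Omega_w)>0$. $(X,T)$ is topologically mixing if for all $a,b\in\mathcal W^1$ there is an $\mathbb N$-valued random variable $N_{ab}$ with $[a]_\omega\cap(T^n_\omega)^{-1}[b]_{\theta^n\omega}\ne\emptyset$ whenever $\omega\in\Omega_a$, $n\ge N_{ab}(\omega)$, $\theta^n\omega\in\Omega_b$. A potential is a measurable $\phi:X\to\mathbb R$, $(\omega,x)\mapsto\phi^\omega(x)$; $\phi^\omega_n(x)=\sum_{k=0}^{n-1}\phi^{\theta^k\omega}(T^k_\omega x)$; $V^\omega_n(\phi)=\sup\{|\phi^\omega(x)-\phi^\omega(y)|: x_i=y_i\ (i<n)\}$. $\phi$ is $k$-Hölder if there are $r\in(0,1)$ and a random variable $\kappa\ge1$ with $\int\log\kappa\,dP<\infty$ and $V^\omega_j(\phi)\le\kappa(\omega)r^j$ for all $j\ge k$, a.e. $\omega$; then $B_\omega:=\exp\sum_{j\ge1}\kappa(\theta^{-j}\omega)r^j$. (H2): $\phi$ is 2-Hölder and $\int\log B_\omega\,dP<\infty$. $L^{\omega,n}_\phi$ denotes the $n$-fold Ruelle operator, $L^{\omega,n}_\phi f(x)=\sum_{y\in X_\omega,T^n_\omega y=x}e^{\phi^\omega_n(y)}f(y)$. For $a\in\mathcal W^1$, $\omega\in\Omega_a$: $\mathcal W^n_\omega(a,a)=\{w\in\mathcal W^n_\omega: w_0=a,\ \alpha_{w_{n-1}a}(\theta^{n-1}\omega)=1\}$;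 fix a measurable family $\xi_\omega\in X_\omega$ with $\xi_\omega\in[a]_\omega$ for $\omega\in\Omega_a$; $\tau_w$ is the inverse of $T^n_\omega|_{[w]_\omega}$; $\mathcal Z^\omega_n(a)=\sum_{w\in\mathcal W^n_\omega(a,a)}e^{\phi^\omega_n(\tau_w(\xi_{\theta^n\omega}))}=L^{\omega,n}_\phi(1_{[a]_\omega})(\xi_{\theta^n\omega})$. *)

theory Defs
  imports "HOL-Probability.Probability" "HOL-Library.Extended_Nat"
begin

(* Sequences x = (x_0, x_1, ...) are functions nat => nat.
   ell :: 'w => enat  (values in N u {infinity}); alpha w i j  <->  alpha_ij(w) = 1. *)

definition base_system :: "'w measure \<Rightarrow> ('w \<Rightarrow> 'w) \<Rightarrow> bool" where
  "base_system M \<theta> \<longleftrightarrow>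
     prob_space M \<and>
     bij_betw \<theta> (space M) (space M) \<and>
     \<theta> \<in> M \<rightarrow>\<^sub>M M \<and>
     (\<forall>A\<in>sets M. \<theta> ` A \<in> sets M) \<and>
     (\<forall>A\<in>sets M. emeasure M (\<theta> -` A \<inter> space M) = emeasure M A) \<and>
     (\<forall>A\<in>sets M. \<theta> -` A \<inter> space M = A \<longrightarrow> measure M A = 0 \<or> measure M A = 1)"

definition theta_inv :: "'w measure \<Rightarrow> ('w \<Rightarrow> 'w) \<Rightarrow> 'w \<Rightarrow> 'w" where
  "theta_inv M \<theta> = the_inv_into (space M) \<theta>"

definition shift_space ::
  "'w measure \<Rightarrow> ('w \<Rightarrow> 'w) \<Rightarrow> ('w \<Rightarrow> enat) \<Rightarrow> ('w \<Rightarrow> nat \<Rightarrow> nat \<Rightarrow> bool) \<Rightarrow> bool" where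
  "shift_space M \<theta> \<L> \<alpha> \<longleftrightarrow>
     \<L> \<in> M \<rightarrow>\<^sub>M count_space UNIV \<and>
     (\<forall>\<omega>\<in>space M. \<L> \<omega> > 1) \<and>
     (\<forall>i j. {\<omega>\<in>space M. \<alpha> \<omega> i j} \<in> sets M) \<and>
     (\<forall>\<omega>\<in>space M. \<forall>i. enat i < \<L> \<omega> \<longrightarrow> (\<exists>j. enat j < \<L> (\<theta> \<omega>) \<and> \<alpha> \<omega> i j))"

definition Xfib :: "('w \<Rightarrow> 'w) \<Rightarrow> ('w \<Rightarrow> enat) \<Rightarrow> ('w \<Rightarrow> nat \<Rightarrow> nat \<Rightarrow> bool) \<Rightarrow> 'w \<Rightarrow> (nat \<Rightarrow> nat) set" where
  "Xfib \<theta> \<L> \<alpha> \<omega> = {x. \<forall>i. enat (x i) < \<L> ((\<theta>^^i) \<omega>) \<and> \<alpha> ((\<theta>^^i) \<omega>) (x i) (x (Suc i))}"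

definition shiftn :: "nat \<Rightarrow> (nat \<Rightarrow> nat) \<Rightarrow> (nat \<Rightarrow> nat)" where
  "shiftn n x = (\<lambda>i. x (i + n))"

definition admissible :: "('w \<Rightarrow> 'w) \<Rightarrow> ('w \<Rightarrow> enat) \<Rightarrow> ('w \<Rightarrow> nat \<Rightarrow> nat \<Rightarrow> bool) \<Rightarrow> 'w \<Rightarrow> nat list \<Rightarrow> bool" where
  "admissible \<theta> \<L> \<alpha> \<omega> w \<longleftrightarrow>
     (\<forall>i<length w. enat (w ! i) < \<L> ((\<theta>^^i) \<omega>)) \<and>
     (\<forall>i. Suc i < length w \<longrightarrow> \<alpha> ((\<theta>^^i) \<omega>) (w ! i) (w ! Suc i))"

definition Omega_w :: "'w measure \<Rightarrow> ('w \<Rightarrow> 'w) \<Rightarrow> ('w \<Rightarrow> enat) \<Rightarrow> ('w \<Rightarrow> nat \<Rightarrow> nat \<Rightarrow> bool) \<Rightarrow> nat list \<Rightarrow> 'w set" where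
  "Omega_w M \<theta> \<L> \<alpha> w = {\<omega>\<in>space M. admissible \<theta> \<L> \<alpha> \<omega> w}"

definition Wn :: "'w measure \<Rightarrow> ('w \<Rightarrow> 'w) \<Rightarrow> ('w \<Rightarrow> enat) \<Rightarrow> ('w \<Rightarrow> nat \<Rightarrow> nat \<Rightarrow> bool) \<Rightarrow> nat \<Rightarrow> nat list set" where
  "Wn M \<theta> \<L> \<alpha> n = {w. length w = n \<and> measure M (Omega_w M \<theta> \<L> \<alpha> w) > 0}"

definition cyl :: "('w \<Rightarrow> 'w) \<Rightarrow> ('w \<Rightarrow> enat) \<Rightarrow> ('w \<Rightarrow> nat \<Rightarrow> nat \<Rightarrow> bool) \<Rightarrow> 'w \<Rightarrow> nat list \<Rightarrow> (nat \<Rightarrow> nat) set" where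
  "cyl \<theta> \<L> \<alpha> \<omega> w = {x \<in> Xfib \<theta> \<L> \<alpha> \<omega>. \<forall>i<length w. x i = w ! i}"

(* topological mixing, with the family of random variables N_ab given explicitly *)
definition top_mixing_with ::
  "'w measure \<Rightarrow> ('w \<Rightarrow> 'w) \<Rightarrow> ('w \<Rightarrow> enat) \<Rightarrow> ('w \<Rightarrow> nat \<Rightarrow> nat \<Rightarrow> bool) \<Rightarrow> (nat \<Rightarrow> nat \<Rightarrow> 'w \<Rightarrow> nat) \<Rightarrow> bool" where
  "top_mixing_with M \<theta> \<L> \<alpha> Nm \<longleftrightarrow>
     (\<forall>a b. [a] \<in> Wn M \<theta> \<L> \<alpha> 1 \<longrightarrow> [b] \<in> Wn M \<theta> \<L> \<alpha> 1 \<longrightarrow>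
        Nm a b \<in> M \<rightarrow>\<^sub>M count_space UNIV \<and>
        (\<forall>\<omega>\<in>Omega_w M \<theta> \<L> \<alpha> [a]. \<forall>n. n \<ge> Nm a b \<omega> \<longrightarrow> (\<theta>^^n) \<omega> \<in> Omega_w M \<theta> \<L> \<alpha> [b] \<longrightarrow>
            cyl \<theta> \<L> \<alpha> \<omega> [a] \<inter> {x \<in> Xfib \<theta> \<L> \<alpha> \<omega>. shiftn n x \<in> cyl \<theta> \<L> \<alpha> ((\<theta>^^n) \<omega>) [b]} \<noteq> {}))"

definition top_mixing ::
  "'w measure \<Rightarrow> ('w \<Rightarrow> 'w) \<Rightarrow> ('w \<Rightarrow> enat) \<Rightarrow> ('w \<Rightarrow> nat \<Rightarrow> nat \<Rightarrow> bool) \<Rightarrow> bool" where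
  "top_mixing M \<theta> \<L> \<alpha> \<longleftrightarrow> (\<exists>Nm. top_mixing_with M \<theta> \<L> \<alpha> Nm)"

definition Xall :: "'w measure \<Rightarrow> ('w \<Rightarrow> 'w) \<Rightarrow> ('w \<Rightarrow> enat) \<Rightarrow> ('w \<Rightarrow> nat \<Rightarrow> nat \<Rightarrow> bool) \<Rightarrow> ('w \<times> (nat \<Rightarrow> nat)) set" where
  "Xall M \<theta> \<L> \<alpha> = {(\<omega>, x). \<omega> \<in> space M \<and> x \<in> Xfib \<theta> \<L> \<alpha> \<omega>}"

definition seq_measure :: "(nat \<Rightarrow> nat) measure" where
  "seq_measure = PiM UNIV (\<lambda>_. count_space UNIV)"

definition potential ::
  "'w measure \<Rightarrow> ('w \<Rightarrow> 'w) \<Rightarrow> ('w \<Rightarrow> enat) \<Rightarrow> ('w \<Rightarrow> nat \<Rightarrow> nat \<Rightarrow> bool) \<Rightarrow> ('w \<Rightarrow> (nat \<Rightarrow> nat) \<Rightarrow> real) \<Rightarrow> bool" where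
  "potential M \<theta> \<L> \<alpha> \<phi> \<longleftrightarrow>
     (\<lambda>(\<omega>, x). \<phi> \<omega> x) \<in> borel_measurable (restrict_space (M \<Otimes>\<^sub>M seq_measure) (Xall M \<theta> \<L> \<alpha>))"

definition phin :: "('w \<Rightarrow> 'w) \<Rightarrow> ('w \<Rightarrow> (nat \<Rightarrow> nat) \<Rightarrow> real) \<Rightarrow> 'w \<Rightarrow> nat \<Rightarrow> (nat \<Rightarrow> nat) \<Rightarrow> real" where
  "phin \<theta> \<phi> \<omega> n x = (\<Sum>k<n. \<phi> ((\<theta>^^k) \<omega>) (shiftn k x))"

definition Var :: "('w \<Rightarrow> 'w) \<Rightarrow> ('w \<Rightarrow> enat) \<Rightarrow> ('w \<Rightarrow> nat \<Rightarrow> nat \<Rightarrow> bool) \<Rightarrow> ('w \<Rightarrow> (nat \<Rightarrow> nat) \<Rightarrow> real) \<Rightarrow> 'w \<Rightarrow> nat \<Rightarrow> ereal" where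
  "Var \<theta> \<L> \<alpha> \<phi> \<omega> n =
     (SUP p \<in> {(x, y). x \<in> Xfib \<theta> \<L> \<alpha> \<omega> \<and> y \<in> Xfib \<theta> \<L> \<alpha> \<omega> \<and> (\<forall>i<n. x i = y i)}.
        ereal \<bar>\<phi> \<omega> (fst p) - \<phi> \<omega> (snd p)\<bar>)"

definition hoelder ::
  "'w measure \<Rightarrow> ('w \<Rightarrow> 'w) \<Rightarrow> ('w \<Rightarrow> enat) \<Rightarrow> ('w \<Rightarrow> nat \<Rightarrow> nat \<Rightarrow> bool) \<Rightarrow> ('w \<Rightarrow> (nat \<Rightarrow> nat) \<Rightarrow> real)
     \<Rightarrow> nat \<Rightarrow> real \<Rightarrow> ('w \<Rightarrow> real) \<Rightarrow> bool" where
  "hoelder M \<theta> \<L> \<alpha> \<phi> k r \<kappa> \<longleftrightarrow>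
     0 < r \<and> r < 1 \<and>
     \<kappa> \<in> borel_measurable M \<and> (\<forall>\<omega>\<in>space M. \<kappa> \<omega> \<ge> 1) \<and>
     integrable M (\<lambda>\<omega>. ln (\<kappa> \<omega>)) \<and>
     (AE \<omega> in M. \<forall>j\<ge>k. Var \<theta> \<L> \<alpha> \<phi> \<omega> j \<le> ereal (\<kappa> \<omega> * r ^ j))"

definition logB :: "'w measure \<Rightarrow> ('w \<Rightarrow> 'w) \<Rightarrow> real \<Rightarrow> ('w \<Rightarrow> real) \<Rightarrow> 'w \<Rightarrow> real" where
  "logB M \<theta> r \<kappa> \<omega> = (\<Sum>j. \<kappa> ((theta_inv M \<theta> ^^ Suc j) \<omega>) * r ^ Suc j)"

definition Bfun :: "'w measure \<Rightarrow> ('w \<Rightarrow> 'w) \<Rightarrow> real \<Rightarrow> ('w \<Rightarrow> real) \<Rightarrow> 'w \<Rightarrow> real" where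
  "Bfun M \<theta> r \<kappa> \<omega> = exp (logB M \<theta> r \<kappa> \<omega>)"

(* (H2): phi is 2-Hoelder and int log B dP < infinity
   (log B >= 0, so finiteness of the integral means: the series converges a.e.
    and log B is integrable) *)
definition H2 ::
  "'w measure \<Rightarrow> ('w \<Rightarrow> 'w) \<Rightarrow> ('w \<Rightarrow> enat) \<Rightarrow> ('w \<Rightarrow> nat \<Rightarrow> nat \<Rightarrow> bool) \<Rightarrow> ('w \<Rightarrow> (nat \<Rightarrow> nat) \<Rightarrow> real)
     \<Rightarrow> real \<Rightarrow> ('w \<Rightarrow> real) \<Rightarrow> bool" where
  "H2 M \<theta> \<L> \<alpha> \<phi> r \<kappa> \<longleftrightarrow>
     hoelder M \<theta> \<L> \<alpha> \<phi> 2 r \<kappa> \<and>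
     (AE \<omega> in M. summable (\<lambda>j. \<kappa> ((theta_inv M \<theta> ^^ Suc j) \<omega>) * r ^ Suc j)) \<and>
     integrable M (\<lambda>\<omega>. ln (Bfun M \<theta> r \<kappa> \<omega>))"

definition ruelle ::
  "('w \<Rightarrow> 'w) \<Rightarrow> ('w \<Rightarrow> enat) \<Rightarrow> ('w \<Rightarrow> nat \<Rightarrow> nat \<Rightarrow> bool) \<Rightarrow> ('w \<Rightarrow> (nat \<Rightarrow> nat) \<Rightarrow> real)
     \<Rightarrow> 'w \<Rightarrow> nat \<Rightarrow> ((nat \<Rightarrow> nat) \<Rightarrow> ennreal) \<Rightarrow> (nat \<Rightarrow> nat) \<Rightarrow> ennreal" where
  "ruelle \<theta> \<L> \<alpha> \<phi> \<omega> n f x =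
     (\<integral>\<^sup>+ y. ennreal (exp (phin \<theta> \<phi> \<omega> n y)) * f y
        \<partial>count_space {y \<in> Xfib \<theta> \<L> \<alpha> \<omega>. shiftn n y = x})"

definition Zfun ::
  "('w \<Rightarrow> 'w) \<Rightarrow> ('w \<Rightarrow> enat) \<Rightarrow> ('w \<Rightarrow> nat \<Rightarrow> nat \<Rightarrow> bool) \<Rightarrow> ('w \<Rightarrow> (nat \<Rightarrow> nat) \<Rightarrow> real)
     \<Rightarrow> ('w \<Rightarrow> nat \<Rightarrow> nat) \<Rightarrow> nat \<Rightarrow> 'w \<Rightarrow> nat \<Rightarrow> ennreal" where
  "Zfun \<theta> \<L> \<alpha> \<phi> \<xi> a \<omega> n =
     ruelle \<theta> \<L> \<alpha> \<phi> \<omega> n (indicator (cyl \<theta> \<L> \<alpha> \<omega> [a])) (\<xi> ((\<theta>^^n) \<omega>))"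

end

theory Submission
  imports Defs
begin

(* The inequality is proved pathwise, for every omega at which the Hoelder
   bound on the variations and the summability of the series defining log B
   hold along the whole forward orbit of omega; such omega have full measure
   because theta preserves P.  Fix omega with theta^m omega in Omega_a.  A
   point y contributing to Z^omega_m(a) ends with xi_{theta^m omega}, whose
   first symbol is a, and a point z contributing to Z^{theta^m omega}_n(a)
   starts with a.  Hence the splice of the first m symbols of y with z is a
   point contributing to Z^omega_{m+n}(a); splicing is injective, and by the
   Hoelder bound the Birkhoff sum of y over m steps exceeds that of the
   splice by at most log B_{theta^m omega}. *)

section \<open>Iterates of the base map\<close>

lemma funpow_funpow: "(f^^n) ((f^^m) x) = (f^^(m+n)) x"
  by (metis add.commute comp_apply funpow_add)

lemma funpow_in_space:
  assumes base: "base_system M \<theta>" and \<omega>: "\<omega> \<in> space M"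
  shows "(\<theta>^^k) \<omega> \<in> space M"
proof -
  have "bij_betw \<theta> (space M) (space M)" using base by (simp add: base_system_def)
  then show ?thesis by (induction k) (use \<omega> in \<open>auto dest: bij_betwE\<close>)
qed

lemma theta_inv_funpow_in_space:
  assumes base: "base_system M \<theta>" and \<omega>: "\<omega> \<in> space M"
  shows "(theta_inv M \<theta> ^^ j) \<omega> \<in> space M"
proof (induction j)
  case 0 then show ?case using \<omega> by simp
next
  case (Suc j)
  have "bij_betw \<theta> (space M) (space M)" using base by (simp add: base_system_def)
  then show ?case
    using Suc the_inv_into_into[of \<theta> "space M" "(theta_inv M \<theta> ^^ j) \<omega>" "space M"]
    unfolding theta_inv_def by (simp add: bij_betw_def)
qed

lemma theta_inv_funpow:
  assumes base: "base_system M \<theta>" and \<omega>: "\<omega> \<in> space M" and "i \<le> m"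
  shows "(theta_inv M \<theta> ^^ i) ((\<theta>^^m) \<omega>) = (\<theta>^^(m-i)) \<omega>"
  using \<open>i \<le> m\<close>
proof (induction i)
  case 0 then show ?case by simp
next
  case (Suc i)
  have inj: "inj_on \<theta> (space M)" using base by (simp add: base_system_def bij_betw_def)
  have "m - i = Suc (m - Suc i)" using Suc.prems by simp
  then have "(theta_inv M \<theta> ^^ Suc i) ((\<theta>^^m) \<omega>) = theta_inv M \<theta> (\<theta> ((\<theta>^^(m - Suc i)) \<omega>))"
    using Suc by simp
  also have "\<dots> = (\<theta>^^(m - Suc i)) \<omega>"
    unfolding theta_inv_def by (rule the_inv_into_f_f[OF inj funpow_in_space[OF base \<omega>]])
  finally show ?case .
qed

lemma funpow_measurable:
  assumes base: "base_system M \<theta>"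
  shows "(\<theta>^^k) \<in> M \<rightarrow>\<^sub>M M"
proof (induction k)
  case 0 then show ?case by simp
next
  case (Suc k)
  have "\<theta> \<in> M \<rightarrow>\<^sub>M M" using base by (simp add: base_system_def)
  from measurable_comp[OF Suc this] show ?case by (simp add: o_def)
qed

lemma funpow_measure_preserving:
  assumes base: "base_system M \<theta>" and A: "A \<in> sets M"
  shows "emeasure M ((\<theta>^^k) -` A \<inter> space M) = emeasure M A"
  using A
proof (induction k arbitrary: A)
  case 0 then show ?case using sets.sets_into_space[OF 0] by (simp add: Int_absorb2)
next
  case (Suc k)
  have \<theta>: "\<theta> \<in> M \<rightarrow>\<^sub>M M" and pres: "\<forall>A\<in>sets M. emeasure M (\<theta> -` A \<inter> space M) = emeasure M A"
    using base by (simp_all add: base_system_def)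
  have unfold: "(\<theta>^^Suc k) -` A \<inter> space M = \<theta> -` ((\<theta>^^k) -` A \<inter> space M) \<inter> space M"
    using measurable_space[OF \<theta>] by (auto simp del: funpow.simps simp: funpow_Suc_right)
  have "(\<theta>^^k) -` A \<inter> space M \<in> sets M"
    using measurable_sets[OF funpow_measurable[OF base] Suc.prems] .
  then have "emeasure M (\<theta> -` ((\<theta>^^k) -` A \<inter> space M) \<inter> space M) = emeasure M ((\<theta>^^k) -` A \<inter> space M)"
    using pres by blast
  then show ?case unfolding unfold using Suc.IH[OF Suc.prems] by simp
qed

lemma AE_funpow:
  assumes base: "base_system M \<theta>" and ae: "AE \<omega> in M. P \<omega>"
  shows "AE \<omega> in M. P ((\<theta>^^k) \<omega>)"
proof -
  obtain N where N: "{x \<in> space M. \<not> P x} \<subseteq> N" "emeasure M N = 0" "N \<in> sets M"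
    using ae by (rule AE_E)
  have "(\<theta>^^k) -` N \<inter> space M \<in> null_sets M"
    using N(2,3) funpow_measure_preserving[OF base, of N k]
      measurable_sets[OF funpow_measurable[OF base], of N k] by auto
  then show ?thesis
    by (rule AE_I') (use N(1) funpow_in_space[OF base] in auto)
qed

section \<open>Shifts and splices of sequences\<close>

lemma shiftn_shiftn: "shiftn n (shiftn m x) = shiftn (m+n) x"
  by (simp add: shiftn_def ac_simps)

lemma shiftn_Xfib:
  assumes "x \<in> Xfib \<theta> L \<alpha> \<omega>"
  shows "shiftn k x \<in> Xfib \<theta> L \<alpha> ((\<theta>^^k) \<omega>)"
  using assms unfolding Xfib_def shiftn_def by (simp add: funpow_funpow add.commute)

lemma phin_add:
  "phin \<theta> \<phi> \<omega> (m+n) x = phin \<theta> \<phi> \<omega> m x + phin \<theta> \<phi> ((\<theta>^^m) \<omega>) n (shiftn m x)"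
proof (induction n)
  case 0 then show ?case by (simp add: phin_def)
next
  case (Suc n)
  then show ?case by (simp add: phin_def shiftn_shiftn funpow_funpow)
qed

definition splice :: "nat \<Rightarrow> (nat \<Rightarrow> nat) \<Rightarrow> (nat \<Rightarrow> nat) \<Rightarrow> nat \<Rightarrow> nat" where
  "splice m y z = (\<lambda>i. if i < m then y i else z (i - m))"

lemma shiftn_splice [simp]: "shiftn m (splice m y z) = z"
  by (simp add: shiftn_def splice_def)

lemma splice_agrees:
  assumes "y m = z 0" and "i \<le> m"
  shows "splice m y z i = y i"
  using assms by (auto simp: splice_def)

text \<open>If y m = z 0, the splice of an omega-admissible y with a theta^m omega-admissible
  z is omega-admissible: the only new transition is the one from y (m-1) to y m.\<close>

lemma splice_Xfib:
  assumes y: "y \<in> Xfib \<theta> L \<alpha> \<omega>" and z: "z \<in> Xfib \<theta> L \<alpha> ((\<theta>^^m) \<omega>)" and yz: "y m = z 0"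
  shows "splice m y z \<in> Xfib \<theta> L \<alpha> \<omega>"
  unfolding Xfib_def
proof (intro CollectI allI conjI)
  fix i
  have orbit: "(\<theta>^^(i-m)) ((\<theta>^^m) \<omega>) = (\<theta>^^i) \<omega>" if "m \<le> i"
    using that by (simp add: funpow_funpow)
  have yi: "enat (y i) < L ((\<theta>^^i) \<omega>)" "\<alpha> ((\<theta>^^i) \<omega>) (y i) (y (Suc i))"
    using y unfolding Xfib_def by auto
  have zi: "enat (z (i-m)) < L ((\<theta>^^i) \<omega>)" "\<alpha> ((\<theta>^^i) \<omega>) (z (i-m)) (z (Suc (i-m)))" if "m \<le> i"
  proof -
    have "enat (z (i-m)) < L ((\<theta>^^(i-m)) ((\<theta>^^m) \<omega>))
        \<and> \<alpha> ((\<theta>^^(i-m)) ((\<theta>^^m) \<omega>)) (z (i-m)) (z (Suc (i-m)))"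
      using z unfolding Xfib_def by blast
    then show "enat (z (i-m)) < L ((\<theta>^^i) \<omega>)" "\<alpha> ((\<theta>^^i) \<omega>) (z (i-m)) (z (Suc (i-m)))"
      using orbit[OF that] by simp_all
  qed
  show "enat (splice m y z i) < L ((\<theta>^^i) \<omega>)"
    using yi zi by (auto simp: splice_def)
  show "\<alpha> ((\<theta>^^i) \<omega>) (splice m y z i) (splice m y z (Suc i))"
  proof (cases "Suc i \<le> m")
    case True then show ?thesis using yi yz by (auto simp: splice_def)
  next
    case False
    then have "Suc i - m = Suc (i - m)" by simp
    then show ?thesis using zi False by (simp add: splice_def)
  qed
qed

lemma splice_inj:
  assumes "splice m y z = splice m y' z'" and "shiftn m y = shiftn m y'"
  shows "y = y' \<and> z = z'"
proof
  show "z = z'" using arg_cong[OF assms(1), of "shiftn m"] by simp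
  show "y = y'"
  proof
    fix i show "y i = y' i"
    proof (cases "i < m")
      case True then show ?thesis using fun_cong[OF assms(1), of i] by (simp add: splice_def)
    next
      case False
      then show ?thesis using fun_cong[OF assms(2), of "i - m"] by (simp add: shiftn_def)
    qed
  qed
qed

section \<open>Bounded distortion\<close>

text \<open>Under the Hoelder bound along the orbit, the Birkhoff sums over m steps of two
  omega-admissible sequences agreeing on the first m+1 symbols differ by at most
  log B at theta^m omega: the k-th terms differ by at most kappa(theta^k omega) r^(m-k+1),
  which is the (m-k)-th term of the series defining log B.\<close>

lemma phin_distortion:
  assumes base: "base_system M \<theta>" and \<omega>: "\<omega> \<in> space M"
    and r: "0 < r" "r < 1" and kap: "\<forall>x\<in>space M. \<kappa> x \<ge> 1"
    and hoelder: "\<forall>k<m. \<forall>j\<ge>2. Var \<theta> L \<alpha> \<phi> ((\<theta>^^k) \<omega>) j \<le> ereal (\<kappa> ((\<theta>^^k) \<omega>) * r ^ j)"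
    and summ: "summable (\<lambda>j. \<kappa> ((theta_inv M \<theta> ^^ Suc j) ((\<theta>^^m) \<omega>)) * r ^ Suc j)"
    and y: "y \<in> Xfib \<theta> L \<alpha> \<omega>" and u: "u \<in> Xfib \<theta> L \<alpha> \<omega>"
    and yu: "\<forall>i\<le>m. y i = u i"
  shows "phin \<theta> \<phi> \<omega> m y \<le> phin \<theta> \<phi> \<omega> m u + logB M \<theta> r \<kappa> ((\<theta>^^m) \<omega>)"
proof -
  define g where "g k = \<kappa> ((\<theta>^^k) \<omega>) * r ^ (m - k + 1)" for k
  have term_bound: "\<phi> ((\<theta>^^k) \<omega>) (shiftn k y) \<le> \<phi> ((\<theta>^^k) \<omega>) (shiftn k u) + g k"
    if k: "k < m" for k
  proof -
    let ?j = "m - k + 1"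
    have "(shiftn k y, shiftn k u) \<in> {(x, y). x \<in> Xfib \<theta> L \<alpha> ((\<theta>^^k) \<omega>)
        \<and> y \<in> Xfib \<theta> L \<alpha> ((\<theta>^^k) \<omega>) \<and> (\<forall>i<?j. x i = y i)}"
      using shiftn_Xfib[OF y, of k] shiftn_Xfib[OF u, of k] yu k by (auto simp: shiftn_def)
    then have "ereal \<bar>\<phi> ((\<theta>^^k) \<omega>) (shiftn k y) - \<phi> ((\<theta>^^k) \<omega>) (shiftn k u)\<bar>
        \<le> Var \<theta> L \<alpha> \<phi> ((\<theta>^^k) \<omega>) ?j"
      unfolding Var_def by (rule SUP_upper2) simp
    also have "\<dots> \<le> ereal (g k)"
    proof -
      have "2 \<le> ?j" using k by simp
      then show ?thesis unfolding g_def using hoelder k by blast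
    qed
    finally show ?thesis by simp
  qed
  have "phin \<theta> \<phi> \<omega> m y \<le> phin \<theta> \<phi> \<omega> m u + (\<Sum>k<m. g k)"
    unfolding phin_def sum.distrib[symmetric] by (rule sum_mono) (use term_bound in auto)
  moreover have "(\<Sum>k<m. g k) \<le> logB M \<theta> r \<kappa> ((\<theta>^^m) \<omega>)"
  proof -
    let ?t = "\<lambda>j. \<kappa> ((theta_inv M \<theta> ^^ Suc j) ((\<theta>^^m) \<omega>)) * r ^ Suc j"
    have t_nonneg: "0 \<le> ?t j" for j
      using kap theta_inv_funpow_in_space[OF base funpow_in_space[OF base \<omega>]] r
      by (meson less_imp_le order.trans zero_le_one zero_le_mult_iff zero_le_power)
    have "(\<Sum>k<m. g k) = (\<Sum>j<m. g (m - Suc j))" by (rule sum.nat_diff_reindex[symmetric])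
    also have "\<dots> \<le> (\<Sum>j<m. ?t j)"
    proof (rule sum_mono)
      fix j assume "j \<in> {..<m}"
      then have j: "j < m" by simp
      have "r ^ Suc (Suc j) \<le> r ^ Suc j" using r by (intro power_decreasing) auto
      moreover have "0 \<le> \<kappa> ((\<theta>^^(m - Suc j)) \<omega>)"
        using kap funpow_in_space[OF base \<omega>] by (meson order.trans zero_le_one)
      moreover have "m - (m - Suc j) + 1 = Suc (Suc j)" using j by simp
      ultimately show "g (m - Suc j) \<le> ?t j"
        unfolding g_def theta_inv_funpow[OF base \<omega> Suc_leI[OF j]] by (simp add: mult_left_mono)
    qed
    also have "\<dots> \<le> logB M \<theta> r \<kappa> ((\<theta>^^m) \<omega>)"
      unfolding logB_def by (rule sum_le_suminf[OF summ]) (use t_nonneg in auto)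
    finally show ?thesis .
  qed
  ultimately show ?thesis by simp
qed

section \<open>Sums over counting measures\<close>

lemma nn_integral_count_space_times:
  fixes f g :: "'a \<Rightarrow> ennreal"
  shows "(\<integral>\<^sup>+y. f y \<partial>count_space A) * (\<integral>\<^sup>+z. g z \<partial>count_space B)
     = (\<integral>\<^sup>+p. f (fst p) * g (snd p) \<partial>count_space (A \<times> B))"
proof -
  let ?F = "\<lambda>y. f y * indicator A y" and ?G = "\<lambda>z. g z * indicator B z"
  have "(\<integral>\<^sup>+y. f y \<partial>count_space A) * (\<integral>\<^sup>+z. g z \<partial>count_space B)
      = (\<integral>\<^sup>+y. ?F y * (\<integral>\<^sup>+z. ?G z \<partial>count_space UNIV) \<partial>count_space UNIV)"
    by (simp add: nn_integral_count_space_indicator nn_integral_multc)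
  also have "\<dots> = (\<integral>\<^sup>+y. \<integral>\<^sup>+z. ?F y * ?G z \<partial>count_space UNIV \<partial>count_space UNIV)"
    by (simp add: nn_integral_cmult)
  also have "\<dots> = (\<integral>\<^sup>+p. (\<lambda>(y,z). ?F y * ?G z) p \<partial>count_space UNIV)"
    using nn_integral_fst_count_space[of "\<lambda>(y,z). ?F y * ?G z"] by simp
  also have "\<dots> = (\<integral>\<^sup>+p. f (fst p) * g (snd p) * indicator (A \<times> B) p \<partial>count_space UNIV)"
    by (rule nn_integral_cong) (auto simp: indicator_def)
  finally show ?thesis by (simp add: nn_integral_count_space_indicator)
qed

lemma nn_integral_count_space_inj_le:
  fixes h :: "'b \<Rightarrow> ennreal"
  assumes "inj_on c S" "c ` S \<subseteq> C"
  shows "(\<integral>\<^sup>+p. h (c p) \<partial>count_space S) \<le> (\<integral>\<^sup>+u. h u \<partial>count_space C)"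
proof -
  have "(\<integral>\<^sup>+p. h (c p) \<partial>count_space S) = (\<integral>\<^sup>+u. h u \<partial>count_space (c ` S))"
    by (rule nn_integral_bij_count_space) (use assms in \<open>simp add: inj_on_imp_bij_betw\<close>)
  also have "\<dots> \<le> (\<integral>\<^sup>+u. h u \<partial>count_space C)"
    using assms(2) by (auto simp: nn_integral_count_space_indicator image_subset_iff intro!: nn_integral_mono
        split: split_indicator)
  finally show ?thesis .
qed

section \<open>Superadditivity of the partition functions\<close>

lemma Zfun_as_sum:
  "Zfun \<theta> L \<alpha> \<phi> \<xi> a \<omega> m =
   (\<integral>\<^sup>+y. ennreal (exp (phin \<theta> \<phi> \<omega> m y))
      \<partial>count_space {y \<in> Xfib \<theta> L \<alpha> \<omega>. shiftn m y = \<xi> ((\<theta>^^m) \<omega>) \<and> y 0 = a})"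
  unfolding Zfun_def ruelle_def
  by (auto simp: nn_integral_count_space_indicator cyl_def intro!: nn_integral_cong
      split: split_indicator)

text \<open>The pathwise inequality: the pairs (y, z) contributing to the product on the left
  are spliced injectively into points contributing to Z^omega_{m+n}(a), at a cost of
  at most the factor B at theta^m omega in the weights.\<close>

lemma Zfun_superadditive:
  assumes base: "base_system M \<theta>" and \<omega>: "\<omega> \<in> space M"
    and r: "0 < r" "r < 1" and kap: "\<forall>x\<in>space M. \<kappa> x \<ge> 1"
    and hoelder: "\<forall>k<m. \<forall>j\<ge>2. Var \<theta> L \<alpha> \<phi> ((\<theta>^^k) \<omega>) j \<le> ereal (\<kappa> ((\<theta>^^k) \<omega>) * r ^ j)"
    and summ: "summable (\<lambda>j. \<kappa> ((theta_inv M \<theta> ^^ Suc j) ((\<theta>^^m) \<omega>)) * r ^ Suc j)"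
    and xi_a: "\<xi> ((\<theta>^^m) \<omega>) 0 = a"
  shows "Zfun \<theta> L \<alpha> \<phi> \<xi> a \<omega> m * Zfun \<theta> L \<alpha> \<phi> \<xi> a ((\<theta>^^m) \<omega>) n
          \<le> ennreal (Bfun M \<theta> r \<kappa> ((\<theta>^^m) \<omega>)) * Zfun \<theta> L \<alpha> \<phi> \<xi> a \<omega> (m+n)"
proof -
  define A where "A = {y \<in> Xfib \<theta> L \<alpha> \<omega>. shiftn m y = \<xi> ((\<theta>^^m) \<omega>) \<and> y 0 = a}"
  define B where "B = {z \<in> Xfib \<theta> L \<alpha> ((\<theta>^^m) \<omega>). shiftn n z = \<xi> ((\<theta>^^n) ((\<theta>^^m) \<omega>)) \<and> z 0 = a}"
  define C where "C = {u \<in> Xfib \<theta> L \<alpha> \<omega>. shiftn (m+n) u = \<xi> ((\<theta>^^(m+n)) \<omega>) \<and> u 0 = a}"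
  define c where "c p = splice m (fst p) (snd p)" for p
  define Bm where "Bm = Bfun M \<theta> r \<kappa> ((\<theta>^^m) \<omega>)"
  define w where "w k \<omega>' x = ennreal (exp (phin \<theta> \<phi> \<omega>' k x))" for k \<omega>' x
  have joins: "fst p m = snd p 0" if "p \<in> A \<times> B" for p
  proof -
    have "shiftn m (fst p) 0 = \<xi> ((\<theta>^^m) \<omega>) 0" "snd p 0 = a"
      using that unfolding A_def B_def by auto
    then show ?thesis using xi_a by (simp add: shiftn_def)
  qed
  have c_in_C: "c p \<in> C" if p: "p \<in> A \<times> B" for p
  proof -
    obtain y z where yz: "p = (y, z)" by (cases p)
    have y: "y \<in> Xfib \<theta> L \<alpha> \<omega>" "y 0 = a"
      and z: "z \<in> Xfib \<theta> L \<alpha> ((\<theta>^^m) \<omega>)" "shiftn n z = \<xi> ((\<theta>^^(m+n)) \<omega>)"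
      using p unfolding yz A_def B_def by (auto simp: funpow_funpow)
    have join: "y m = z 0" using joins[OF p] unfolding yz by simp
    have "shiftn (m+n) (splice m y z) = \<xi> ((\<theta>^^(m+n)) \<omega>)"
      using z(2) by (simp add: shiftn_shiftn[symmetric])
    then show ?thesis
      using splice_Xfib[OF y(1) z(1) join] splice_agrees[of y m z 0, OF join] y(2)
      unfolding C_def c_def yz by simp
  qed
  have inj: "inj_on c (A \<times> B)"
  proof (rule inj_onI)
    fix p q assume "p \<in> A \<times> B" "q \<in> A \<times> B" and cpq: "c p = c q"
    then have "shiftn m (fst p) = shiftn m (fst q)" unfolding A_def by auto
    with cpq have "fst p = fst q \<and> snd p = snd q" unfolding c_def by (rule splice_inj)
    then show "p = q" by (simp add: prod_eq_iff)
  qed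
  have weight: "w m \<omega> (fst p) * w n ((\<theta>^^m) \<omega>) (snd p) \<le> ennreal Bm * w (m+n) \<omega> (c p)"
    if p: "p \<in> A \<times> B" for p
  proof -
    have "phin \<theta> \<phi> \<omega> m (fst p) \<le> phin \<theta> \<phi> \<omega> m (c p) + ln Bm"
      unfolding Bm_def Bfun_def ln_exp
      by (rule phin_distortion[OF base \<omega> r kap hoelder summ])
        (use p c_in_C splice_agrees[where y="fst p" and z="snd p", OF joins[OF p]]
          in \<open>auto simp: A_def C_def c_def\<close>)
    then have "exp (phin \<theta> \<phi> \<omega> m (fst p)) \<le> Bm * exp (phin \<theta> \<phi> \<omega> m (c p))"
      unfolding Bm_def Bfun_def by (simp add: exp_add[symmetric] add.commute)
    moreover have "phin \<theta> \<phi> \<omega> (m+n) (c p) = phin \<theta> \<phi> \<omega> m (c p) + phin \<theta> \<phi> ((\<theta>^^m) \<omega>) n (snd p)"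
      unfolding phin_add c_def by simp
    ultimately have "exp (phin \<theta> \<phi> \<omega> m (fst p)) * exp (phin \<theta> \<phi> ((\<theta>^^m) \<omega>) n (snd p))
        \<le> Bm * exp (phin \<theta> \<phi> \<omega> (m+n) (c p))"
      by (simp add: exp_add mult.assoc)
    moreover have "0 \<le> Bm" unfolding Bm_def Bfun_def by simp
    ultimately show ?thesis unfolding w_def by (simp add: ennreal_mult[symmetric] ennreal_leI)
  qed
  have "Zfun \<theta> L \<alpha> \<phi> \<xi> a \<omega> m * Zfun \<theta> L \<alpha> \<phi> \<xi> a ((\<theta>^^m) \<omega>) n
      = (\<integral>\<^sup>+p. w m \<omega> (fst p) * w n ((\<theta>^^m) \<omega>) (snd p) \<partial>count_space (A \<times> B))"
    unfolding Zfun_as_sum A_def B_def w_def by (rule nn_integral_count_space_times)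
  also have "\<dots> \<le> (\<integral>\<^sup>+p. ennreal Bm * w (m+n) \<omega> (c p) \<partial>count_space (A \<times> B))"
    by (rule nn_integral_mono) (use weight in simp)
  also have "\<dots> = ennreal Bm * (\<integral>\<^sup>+p. w (m+n) \<omega> (c p) \<partial>count_space (A \<times> B))"
    by (rule nn_integral_cmult) simp
  also have "\<dots> \<le> ennreal Bm * (\<integral>\<^sup>+u. w (m+n) \<omega> u \<partial>count_space C)"
    by (intro mult_left_mono nn_integral_count_space_inj_le[OF inj]) (use c_in_C in auto)
  also have "\<dots> = ennreal Bm * Zfun \<theta> L \<alpha> \<phi> \<xi> a \<omega> (m+n)"
    unfolding Zfun_as_sum C_def w_def ..
  finally show ?thesis unfolding Bm_def .
qed

text \<open>Under (H2) the pathwise hypotheses of the previous lemma hold along the whole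
  orbit of almost every omega, because theta preserves P.\<close>

lemma Zfun_superadditive_AE:
  assumes base: "base_system M \<theta>" and h2: "H2 M \<theta> L \<alpha> \<phi> r \<kappa>"
    and xi_a: "\<forall>\<omega>\<in>Omega_w M \<theta> L \<alpha> [a]. \<xi> \<omega> \<in> cyl \<theta> L \<alpha> \<omega> [a]"
  shows "AE \<omega> in M. \<forall>m n. (\<theta>^^m) \<omega> \<in> Omega_w M \<theta> L \<alpha> [a] \<longrightarrow>
           Zfun \<theta> L \<alpha> \<phi> \<xi> a \<omega> m * Zfun \<theta> L \<alpha> \<phi> \<xi> a ((\<theta>^^m) \<omega>) n
             \<le> ennreal (Bfun M \<theta> r \<kappa> ((\<theta>^^m) \<omega>)) * Zfun \<theta> L \<alpha> \<phi> \<xi> a \<omega> (m+n)"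
proof -
  have r: "0 < r" "r < 1" and kap: "\<forall>x\<in>space M. \<kappa> x \<ge> 1"
    and hoelder: "AE \<omega> in M. \<forall>j\<ge>2. Var \<theta> L \<alpha> \<phi> \<omega> j \<le> ereal (\<kappa> \<omega> * r ^ j)"
    and summ: "AE \<omega> in M. summable (\<lambda>j. \<kappa> ((theta_inv M \<theta> ^^ Suc j) \<omega>) * r ^ Suc j)"
    using h2 unfolding H2_def hoelder_def by auto
  define good where "good \<omega> \<longleftrightarrow> (\<forall>j\<ge>2. Var \<theta> L \<alpha> \<phi> \<omega> j \<le> ereal (\<kappa> \<omega> * r ^ j))
      \<and> summable (\<lambda>j. \<kappa> ((theta_inv M \<theta> ^^ Suc j) \<omega>) * r ^ Suc j)" for \<omega>
  have "AE \<omega> in M. good \<omega>" using hoelder summ unfolding good_def by auto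
  from AE_funpow[OF base this] have "AE \<omega> in M. \<forall>k. good ((\<theta>^^k) \<omega>)"
    by (simp add: AE_all_countable)
  then show ?thesis using AE_space
  proof eventually_elim
    case (elim \<omega>)
    show ?case
    proof (intro allI impI)
      fix m n assume "(\<theta>^^m) \<omega> \<in> Omega_w M \<theta> L \<alpha> [a]"
      then have "\<xi> ((\<theta>^^m) \<omega>) 0 = a" using xi_a by (auto simp: cyl_def)
      then show "Zfun \<theta> L \<alpha> \<phi> \<xi> a \<omega> m * Zfun \<theta> L \<alpha> \<phi> \<xi> a ((\<theta>^^m) \<omega>) n
          \<le> ennreal (Bfun M \<theta> r \<kappa> ((\<theta>^^m) \<omega>)) * Zfun \<theta> L \<alpha> \<phi> \<xi> a \<omega> (m+n)"
        using elim by (intro Zfun_superadditive[OF base _ r kap]) (auto simp: good_def)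
    qed
  qed
qed

theorem mainTheorem3:
  fixes M :: "'w measure" and \<theta> :: "'w \<Rightarrow> 'w" and \<L> :: "'w \<Rightarrow> enat"
    and \<alpha> :: "'w \<Rightarrow> nat \<Rightarrow> nat \<Rightarrow> bool" and \<phi> :: "'w \<Rightarrow> (nat \<Rightarrow> nat) \<Rightarrow> real"
    and r :: real and \<kappa> :: "'w \<Rightarrow> real" and Nm :: "nat \<Rightarrow> nat \<Rightarrow> 'w \<Rightarrow> nat"
    and \<xi> :: "'w \<Rightarrow> nat \<Rightarrow> nat" and a N :: nat
  assumes base: "base_system M \<theta>"
    and shsp: "shift_space M \<theta> \<L> \<alpha>"
    and mix: "top_mixing_with M \<theta> \<L> \<alpha> Nm"
    and pot: "potential M \<theta> \<L> \<alpha> \<phi>"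
    and h2: "H2 M \<theta> \<L> \<alpha> \<phi> r \<kappa>"
    and xi_meas: "\<xi> \<in> M \<rightarrow>\<^sub>M seq_measure"
    and xi_X: "\<forall>\<omega>\<in>space M. \<xi> \<omega> \<in> Xfib \<theta> \<L> \<alpha> \<omega>"
    and xi_a: "\<forall>\<omega>\<in>Omega_w M \<theta> \<L> \<alpha> [a]. \<xi> \<omega> \<in> cyl \<theta> \<L> \<alpha> \<omega> [a]"
    and a_W1: "[a] \<in> Wn M \<theta> \<L> \<alpha> 1"
    and pos: "measure M {\<omega> \<in> Omega_w M \<theta> \<L> \<alpha> [a]. Nm a a \<omega> \<le> N} > 0"
  shows "AE \<omega> in M. \<omega> \<in> {\<omega> \<in> Omega_w M \<theta> \<L> \<alpha> [a]. Nm a a \<omega> \<le> N} \<longrightarrow>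
           (\<forall>m n. N \<le> m \<longrightarrow> N \<le> n \<longrightarrow>
              (\<theta>^^m) \<omega> \<in> {\<omega> \<in> Omega_w M \<theta> \<L> \<alpha> [a]. Nm a a \<omega> \<le> N} \<longrightarrow>
              (\<theta>^^(m+n)) \<omega> \<in> {\<omega> \<in> Omega_w M \<theta> \<L> \<alpha> [a]. Nm a a \<omega> \<le> N} \<longrightarrow>
              Zfun \<theta> \<L> \<alpha> \<phi> \<xi> a \<omega> m * Zfun \<theta> \<L> \<alpha> \<phi> \<xi> a ((\<theta>^^m) \<omega>) n
                \<le> ennreal (Bfun M \<theta> r \<kappa> ((\<theta>^^m) \<omega>)) * Zfun \<theta> \<L> \<alpha> \<phi> \<xi> a \<omega> (m+n))"
proof -
  let ?\<Omega>\<^sub>a = "Omega_w M \<theta> \<L> \<alpha> [a]"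
  have "AE \<omega> in M. \<forall>m n. (\<theta>^^m) \<omega> \<in> ?\<Omega>\<^sub>a \<longrightarrow>
          Zfun \<theta> \<L> \<alpha> \<phi> \<xi> a \<omega> m * Zfun \<theta> \<L> \<alpha> \<phi> \<xi> a ((\<theta>^^m) \<omega>) n
            \<le> ennreal (Bfun M \<theta> r \<kappa> ((\<theta>^^m) \<omega>)) * Zfun \<theta> \<L> \<alpha> \<phi> \<xi> a \<omega> (m+n)"
    by (rule Zfun_superadditive_AE[OF base h2 xi_a])
  then show ?thesis by (rule eventually_mono) blast
qed

end
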